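(* There is a universal constant $C$ such that for every Borel set $A\subset[0,1]$ (with Lebesgue measure $|A|$): \[ \|G_{\mathbf{k}}\|_{L^1(A\times A)}\leq C\,\frac{|A|}{|\mathbf{k}|}\min\Big\{|A|,\frac{1}{|\mathbf{k}|}\Big\}\quad\text{for all }\mathbf{k}\neq\mathbf 0, \] and \[ \|G_{\mathbf{0}}\|_{L^1(A\times A)}\leq C\,|A|^2\,\frac{1}{|A|}\int_A\min\{z,1-z\}\,dz . \]
   Context: For $\mathbf{k}\in\mathbb{R}^2\setminus\{\mathbf 0\}$ and $z,z'\in[0,1]$, $G_{\mathbf{k}}(z,z')=\frac{\mathrm{csch}(|\mathbf{k}|)}{|\mathbf{k}|}\sinh(|\mathbf{k}|z)\sinh(|\mathbf{k}|(1-z'))$ if $z\le z'$ and $\frac{\mathrm{csch}(|\mathbf{k}|)}{|\mathbf{k}|}\sinh(|\mathbf{k}|z')\sinh(|\mathbf{k}|(1-z))$ if $z\ge z'$; $G_{\mathbf 0}(z,z')=z(1-z')$ if $z\le z'$ and $z'(1-z)$ if $z\ge z'$. These are the Green's functions of $-\frac{d^2}{dz^2}+|\mathbf{k}|^2$ on $[0,1]$ with zero Dirichlet conditions. *)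

theory Defs
  imports "HOL-Analysis.Analysis"
begin

text \<open>Green's function of -d^2/dz^2 + |k|^2 on [0,1] with zero Dirichlet conditions,
  for k in R^2. csch r = 1 / sinh r.\<close>
definition green :: "real^2 \<Rightarrow> real \<Rightarrow> real \<Rightarrow> real" where
  "green k z z' =
     (if k = 0 then (if z \<le> z' then z * (1 - z') else z' * (1 - z))
      else (let r = norm k in
            if z \<le> z' then (1 / sinh r) / r * sinh (r * z) * sinh (r * (1 - z'))
            else (1 / sinh r) / r * sinh (r * z') * sinh (r * (1 - z))))"

definition green_L1 :: "real^2 \<Rightarrow> real set \<Rightarrow> ennreal" where
  "green_L1 k A = (\<integral>\<^sup>+ p. indicator (A \<times> A) p * ennreal \<bar>green k (fst p) (snd p)\<bar>
                      \<partial>(lborel \<Otimes>\<^sub>M lborel))"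

end

theory Submission
  imports Defs "HOL-Probability.Distributions"
begin

text \<open>
  The Green's function decays exponentially off the diagonal:
  2 sinh a sinh b e^c <= sinh (a + b + c) gives
  |G_k(z,z')| <= e^(-|k| |z - z'|) / (2 |k|).
  Bounding the kernel by its supremum 1/(2|k|) gives |A|^2/(2|k|); integrating the
  exponential in z' over the whole line instead gives |A|/|k|^2. Together these give
  |A|/|k| min{|A|, 1/|k|}. For k = 0 one has |G_0(z,z')| <= min{z, 1 - z}, so the
  z'-integration only contributes a factor |A|.
\<close>

lemma sinh_mult_sinh_mult_exp_le:
  fixes a b c :: real
  assumes "0 \<le> a" "0 \<le> b" "0 \<le> c"
  shows "2 * sinh a * sinh b * exp c \<le> sinh (a + b + c)"
proof -
  have nonneg: "0 \<le> sinh a" "0 \<le> sinh b" "0 \<le> sinh c"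
    using assms by auto
  have "2 * sinh a * sinh b \<le> sinh a * cosh b + cosh a * sinh b"
    using mult_left_mono[OF sinh_le_cosh_real[of b] nonneg(1)]
          mult_right_mono[OF sinh_le_cosh_real[of a] nonneg(2)] by linarith
  also have "\<dots> = sinh (a + b)"
    by (simp add: sinh_add)
  finally have "2 * sinh a * sinh b * exp c \<le> sinh (a + b) * exp c"
    by (simp add: mult_right_mono)
  also have "\<dots> = sinh (a + b) * cosh c + sinh (a + b) * sinh c"
    by (simp flip: cosh_plus_sinh add: distrib_left)
  also have "\<dots> \<le> sinh (a + b) * cosh c + cosh (a + b) * sinh c"
    using mult_right_mono[OF sinh_le_cosh_real[of "a + b"] nonneg(3)] by simp
  also have "\<dots> = sinh (a + b + c)"
    by (simp add: sinh_add)
  finally show ?thesis .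
qed

lemma sinh_mult_sinh_div_le_exp:
  fixes r x y :: real
  assumes "0 < r" "0 \<le> x" "x \<le> y" "y \<le> 1"
  shows "1 / sinh r / r * sinh (r * x) * sinh (r * (1 - y)) \<le> exp (- r * (y - x)) / (2 * r)"
proof -
  have "2 * sinh (r * x) * sinh (r * (1 - y)) * exp (r * (y - x))
          \<le> sinh (r * x + r * (1 - y) + r * (y - x))"
    using assms by (intro sinh_mult_sinh_mult_exp_le) auto
  also have "r * x + r * (1 - y) + r * (y - x) = r"
    by (simp add: algebra_simps)
  finally have "2 * sinh (r * x) * sinh (r * (1 - y)) * exp (r * (y - x)) \<le> sinh r" .
  then have "2 * sinh (r * x) * sinh (r * (1 - y)) * exp (r * (y - x)) * exp (- r * (y - x))
               \<le> sinh r * exp (- r * (y - x))"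
    by (rule mult_right_mono) simp
  then have "2 * sinh (r * x) * sinh (r * (1 - y)) \<le> sinh r * exp (- r * (y - x))"
    by (simp only: mult.assoc flip: exp_add) simp
  moreover have "0 < sinh r"
    using assms by simp
  ultimately show ?thesis
    using assms by (simp add: field_simps)
qed

lemma green_sym: "green k z z' = green k z' z"
  unfolding green_def Let_def by (simp add: mult_ac)

lemma abs_green_le_exp:
  assumes "k \<noteq> 0" "z \<in> {0..1}" "z' \<in> {0..1}"
  shows "\<bar>green k z z'\<bar> \<le> exp (- norm k * \<bar>z - z'\<bar>) / (2 * norm k)"
proof -
  have ordered: "\<bar>green k x y\<bar> \<le> exp (- norm k * \<bar>x - y\<bar>) / (2 * norm k)"
    if "0 \<le> x" "x \<le> y" "y \<le> 1" for x y
  proof -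
    have "0 \<le> green k x y"
      using assms that by (simp add: green_def Let_def)
    then show ?thesis
      using sinh_mult_sinh_div_le_exp[of "norm k" x y] assms that
      by (simp add: green_def Let_def)
  qed
  show ?thesis
  proof (cases "z \<le> z'")
    case True
    then show ?thesis using ordered[of z z'] assms by simp
  next
    case False
    then show ?thesis using ordered[of z' z] assms by (simp add: green_sym[of k z] abs_minus_commute)
  qed
qed

lemma abs_green_zero_le:
  assumes "z \<in> {0..1}" "z' \<in> {0..1}"
  shows "\<bar>green 0 z z'\<bar> \<le> min z (1 - z)"
proof (cases "z \<le> z'")
  case True
  have "z * (1 - z') \<le> z" "z * (1 - z') \<le> 1 - z'"
    using assms by (auto intro: mult_left_le mult_left_le_one_le)
  then show ?thesis
    using assms True by (simp add: green_def)
next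
  case False
  have "z' * (1 - z) \<le> z'" "z' * (1 - z) \<le> 1 - z"
    using assms by (auto intro: mult_left_le mult_left_le_one_le)
  then show ?thesis
    using assms False by (simp add: green_def)
qed

lemma emeasure_lborel_eq_measure_if_bounded:
  fixes A :: "'a::euclidean_space set"
  assumes "bounded A"
  shows "emeasure lborel A = ennreal (measure lborel A)"
  using emeasure_bounded_finite[OF assms] by (simp add: emeasure_eq_ennreal_measure)

lemma nn_integral_exp_neg_halfline:
  fixes r :: real
  assumes "0 < r"
  shows "(\<integral>\<^sup>+ u. ennreal (exp (- r * u) * indicator {0..} u) \<partial>lborel) = ennreal (1 / r)"
proof -
  have "(\<integral>\<^sup>+ u. ennreal (exp (- r * u) * indicator {0..} u) \<partial>lborel)
      = (\<integral>\<^sup>+ u. ennreal (1 / r) * ennreal (exponential_density r u) \<partial>lborel)"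
    using assms
    by (intro nn_integral_cong) (auto simp: exponential_density_def indicator_def simp flip: ennreal_mult)
  also have "\<dots> = ennreal (1 / r) * (\<integral>\<^sup>+ u. ennreal (exponential_density r u) \<partial>lborel)"
    by (rule nn_integral_cmult) (simp add: borel_measurable_erlang_density)
  also have "(\<integral>\<^sup>+ u. ennreal (exponential_density r u) \<partial>lborel) = 1"
    using nn_integral_erlang_ith_moment[OF assms, of 0 0] by simp
  finally show ?thesis
    by simp
qed

lemma nn_integral_exp_neg_abs_le:
  fixes r :: real
  assumes r: "0 < r"
  shows "(\<integral>\<^sup>+ y. ennreal (exp (- r * \<bar>x - y\<bar>)) \<partial>lborel) \<le> ennreal (2 / r)"
proof -
  have reflect: "(\<integral>\<^sup>+ u. g (- u) \<partial>lborel) = (\<integral>\<^sup>+ u. g u \<partial>lborel)"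
    if "g \<in> borel_measurable borel" for g :: "real \<Rightarrow> ennreal"
    using nn_integral_real_affine[OF that, of "-1" 0] by simp
  have "(\<integral>\<^sup>+ y. ennreal (exp (- r * \<bar>x - y\<bar>)) \<partial>lborel)
      = (\<integral>\<^sup>+ u. ennreal (exp (- r * \<bar>u\<bar>)) \<partial>lborel)"
    using nn_integral_real_affine[of "\<lambda>y. ennreal (exp (- r * \<bar>x - y\<bar>))" "-1" x] by simp
  also have "\<dots> \<le> (\<integral>\<^sup>+ u. ennreal (exp (- r * u) * indicator {0..} u)
                      + ennreal (exp (- r * (- u)) * indicator {0..} (- u)) \<partial>lborel)"
    by (intro nn_integral_mono) (auto simp: indicator_def simp flip: ennreal_plus)
  also have "\<dots> = (\<integral>\<^sup>+ u. ennreal (exp (- r * u) * indicator {0..} u) \<partial>lborel)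
                 + (\<integral>\<^sup>+ u. ennreal (exp (- r * (- u)) * indicator {0..} (- u)) \<partial>lborel)"
    by (rule nn_integral_add) auto
  also have "(\<integral>\<^sup>+ u. ennreal (exp (- r * (- u)) * indicator {0..} (- u)) \<partial>lborel)
           = (\<integral>\<^sup>+ u. ennreal (exp (- r * u) * indicator {0..} u) \<partial>lborel)"
    by (rule reflect) simp
  also have "(\<integral>\<^sup>+ u. ennreal (exp (- r * u) * indicator {0..} u) \<partial>lborel)
             + (\<integral>\<^sup>+ u. ennreal (exp (- r * u) * indicator {0..} u) \<partial>lborel) = ennreal (2 / r)"
    unfolding nn_integral_exp_neg_halfline[OF r] using r by (simp flip: ennreal_plus)
  finally show ?thesis .
qed

lemma nn_integral_iterated_indicator:
  assumes [measurable]: "A \<in> sets M" "B \<in> sets N" "g \<in> borel_measurable M"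
  shows "(\<integral>\<^sup>+ x. \<integral>\<^sup>+ y. indicator A x * indicator B y * g x \<partial>N \<partial>M)
           = (\<integral>\<^sup>+ x. g x * indicator A x \<partial>M) * emeasure N B"
proof -
  have "(\<integral>\<^sup>+ y. indicator A x * indicator B y * g x \<partial>N) = g x * indicator A x * emeasure N B" for x
    using nn_integral_cmult_indicator[OF assms(2), of "g x * indicator A x"] by (simp add: mult_ac)
  then show ?thesis
    by (simp add: nn_integral_multc)
qed

lemma nn_integral_indicator_eq_set_integral:
  fixes u :: "'a \<Rightarrow> real"
  assumes "set_integrable M A u" "A \<in> sets M" "\<And>x. x \<in> A \<Longrightarrow> 0 \<le> u x"
  shows "(\<integral>\<^sup>+ x. ennreal (u x) * indicator A x \<partial>M) = ennreal (LINT x:A|M. u x)"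
  unfolding set_lebesgue_integral_def nn_integral_set_ennreal using assms
  by (subst nn_integral_eq_integral) (auto simp: mult_ac set_integrable_def indicator_def)

lemma green_L1_le_iterated:
  fixes f :: "real \<Rightarrow> real \<Rightarrow> real"
  assumes [measurable]: "A \<in> sets borel"
    and [measurable]: "(\<lambda>p. f (fst p) (snd p)) \<in> borel_measurable (lborel \<Otimes>\<^sub>M lborel)"
    and bound: "\<And>x y. x \<in> A \<Longrightarrow> y \<in> A \<Longrightarrow> \<bar>green k x y\<bar> \<le> f x y"
  shows "green_L1 k A
           \<le> (\<integral>\<^sup>+ x. \<integral>\<^sup>+ y. indicator A x * indicator A y * ennreal (f x y) \<partial>lborel \<partial>lborel)"
proof -
  let ?g = "\<lambda>p. indicator A (fst p) * indicator A (snd p) * ennreal (f (fst p) (snd p))"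
  have "green_L1 k A \<le> (\<integral>\<^sup>+ p. ?g p \<partial>(lborel \<Otimes>\<^sub>M lborel))"
    unfolding green_L1_def
    by (intro nn_integral_mono) (auto simp: indicator_def mem_Times_iff intro: ennreal_leI bound)
  also have "\<dots> = (\<integral>\<^sup>+ x. \<integral>\<^sup>+ y. indicator A x * indicator A y * ennreal (f x y) \<partial>lborel \<partial>lborel)"
    using lborel.nn_integral_fst[of ?g] by simp
  finally show ?thesis .
qed

lemma green_L1_le_measure_sq:
  assumes A: "A \<in> sets borel" "A \<subseteq> {0..1}" and k: "k \<noteq> 0"
  shows "green_L1 k A \<le> ennreal ((measure lborel A)\<^sup>2 / (2 * norm k))"
proof -
  have "green_L1 k A
          \<le> (\<integral>\<^sup>+ x. \<integral>\<^sup>+ y. indicator A x * indicator A y * ennreal (1 / (2 * norm k)) \<partial>lborel \<partial>lborel)"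
  proof (rule green_L1_le_iterated[OF A(1)])
    fix x y assume "x \<in> A" "y \<in> A"
    then have "\<bar>green k x y\<bar> \<le> exp (- norm k * \<bar>x - y\<bar>) / (2 * norm k)"
      using A(2) k by (intro abs_green_le_exp) auto
    also have "\<dots> \<le> 1 / (2 * norm k)"
      using k by (intro divide_right_mono) auto
    finally show "\<bar>green k x y\<bar> \<le> 1 / (2 * norm k)" .
  qed simp
  also have "\<dots> = ennreal (1 / (2 * norm k)) * emeasure lborel A * emeasure lborel A"
    using A(1) by (simp add: nn_integral_iterated_indicator nn_integral_cmult_indicator)
  also have "\<dots> = ennreal ((measure lborel A)\<^sup>2 / (2 * norm k))"
    using bounded_subset[OF bounded_closed_interval A(2)]
    by (simp add: emeasure_lborel_eq_measure_if_bounded power2_eq_square ennreal_mult'' flip: ennreal_mult)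
  finally show ?thesis .
qed

lemma green_L1_le_measure_div_sq:
  assumes A: "A \<in> sets borel" "A \<subseteq> {0..1}" and k: "k \<noteq> 0"
  shows "green_L1 k A \<le> ennreal (measure lborel A / (norm k)\<^sup>2)"
proof -
  define r where "r = norm k"
  have r: "0 < r"
    using k by (simp add: r_def)
  have "green_L1 k A
          \<le> (\<integral>\<^sup>+ x. \<integral>\<^sup>+ y. indicator A x * indicator A y * ennreal (exp (- r * \<bar>x - y\<bar>) / (2 * r))
               \<partial>lborel \<partial>lborel)"
  proof (rule green_L1_le_iterated[OF A(1)])
    fix x y assume "x \<in> A" "y \<in> A"
    with A(2) have "x \<in> {0..1}" "y \<in> {0..1}"
      by auto
    with k show "\<bar>green k x y\<bar> \<le> exp (- r * \<bar>x - y\<bar>) / (2 * r)"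
      unfolding r_def by (rule abs_green_le_exp)
  qed measurable
  also have "\<dots> \<le> (\<integral>\<^sup>+ x. ennreal (1 / r\<^sup>2) * indicator A x \<partial>lborel)"
  proof (intro nn_integral_mono)
    fix x
    have split: "ennreal (exp t / (2 * r)) = ennreal (1 / (2 * r)) * ennreal (exp t)" for t
      using r by (simp flip: ennreal_mult)
    have "(\<integral>\<^sup>+ y. indicator A x * indicator A y * ennreal (exp (- r * \<bar>x - y\<bar>) / (2 * r)) \<partial>lborel)
            \<le> (\<integral>\<^sup>+ y. indicator A x * ennreal (1 / (2 * r)) * ennreal (exp (- r * \<bar>x - y\<bar>)) \<partial>lborel)"
      by (intro nn_integral_mono) (simp add: split indicator_def)
    also have "\<dots> = indicator A x * (ennreal (1 / (2 * r)) * (\<integral>\<^sup>+ y. ennreal (exp (- r * \<bar>x - y\<bar>)) \<partial>lborel))"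
      by (subst nn_integral_cmult) (simp_all add: mult.assoc)
    also have "\<dots> \<le> indicator A x * (ennreal (1 / (2 * r)) * ennreal (2 / r))"
      using r by (intro mult_left_mono nn_integral_exp_neg_abs_le) auto
    also have "ennreal (1 / (2 * r)) * ennreal (2 / r) = ennreal (1 / r\<^sup>2)"
      using r by (simp add: power2_eq_square flip: ennreal_mult)
    also have "indicator A x * ennreal (1 / r\<^sup>2) = ennreal (1 / r\<^sup>2) * indicator A x"
      by (rule mult.commute)
    finally show "(\<integral>\<^sup>+ y. indicator A x * indicator A y * ennreal (exp (- r * \<bar>x - y\<bar>) / (2 * r)) \<partial>lborel)
                    \<le> ennreal (1 / r\<^sup>2) * indicator A x" .
  qed
  also have "\<dots> = ennreal (measure lborel A / r\<^sup>2)"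
    using A bounded_subset[OF bounded_closed_interval A(2)] r
    by (simp add: nn_integral_cmult_indicator emeasure_lborel_eq_measure_if_bounded flip: ennreal_mult)
  finally show ?thesis
    by (simp add: r_def)
qed

lemma green_L1_le_measure_min:
  assumes A: "A \<in> sets borel" "A \<subseteq> {0..1}" and k: "k \<noteq> 0"
  shows "green_L1 k A \<le> ennreal (measure lborel A / norm k * min (measure lborel A) (1 / norm k))"
proof (cases "measure lborel A \<le> 1 / norm k")
  case True
  have "(measure lborel A)\<^sup>2 / (2 * norm k) \<le> (measure lborel A)\<^sup>2 / norm k"
    using k by (intro frac_le) auto
  also have "\<dots> = measure lborel A / norm k * min (measure lborel A) (1 / norm k)"
    using True by (simp add: power2_eq_square)
  finally show ?thesis
    using green_L1_le_measure_sq[OF A k] by (meson ennreal_leI order_trans)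
next
  case False
  then have "measure lborel A / (norm k)\<^sup>2 = measure lborel A / norm k * min (measure lborel A) (1 / norm k)"
    by (simp add: power2_eq_square)
  then show ?thesis
    using green_L1_le_measure_div_sq[OF A k] by simp
qed

lemma green_L1_zero_le:
  assumes A: "A \<in> sets borel" "A \<subseteq> {0..1}"
  shows "green_L1 0 A \<le> ennreal (measure lborel A * (LINT z:A|lborel. min z (1 - z)))"
proof -
  have "set_integrable lborel A (\<lambda>z::real. min z (1 - z))"
    using A by (intro set_integrable_subset[OF borel_integrable_atLeastAtMost'] continuous_intros) auto
  then have integral: "(\<integral>\<^sup>+ z. ennreal (min z (1 - z)) * indicator A z \<partial>lborel)
                         = ennreal (LINT z:A|lborel. min z (1 - z))"
    using A by (intro nn_integral_indicator_eq_set_integral) auto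
  have "green_L1 0 A
          \<le> (\<integral>\<^sup>+ x. \<integral>\<^sup>+ y. indicator A x * indicator A y * ennreal (min x (1 - x)) \<partial>lborel \<partial>lborel)"
    using A by (intro green_L1_le_iterated abs_green_zero_le) auto
  also have "\<dots> = ennreal (LINT z:A|lborel. min z (1 - z)) * emeasure lborel A"
    using A(1) by (simp add: nn_integral_iterated_indicator integral)
  also have "\<dots> = ennreal (measure lborel A * (LINT z:A|lborel. min z (1 - z)))"
    using bounded_subset[OF bounded_closed_interval A(2)]
    by (simp add: emeasure_lborel_eq_measure_if_bounded ennreal_mult' mult.commute)
  finally show ?thesis .
qed

theorem lemma3p3:
  shows "\<exists>C::real. \<forall>A::real set. A \<in> sets borel \<and> A \<subseteq> {0..1} \<longrightarrow>
     (\<forall>k::real^2. k \<noteq> 0 \<longrightarrow>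
        green_L1 k A \<le> ennreal (C * (measure lborel A / norm k)
                                   * min (measure lborel A) (1 / norm k)))
   \<and> green_L1 0 A \<le> ennreal (C * (measure lborel A)\<^sup>2 * (1 / measure lborel A)
                              * (LINT z:A|lborel. min z (1 - z)))"
proof (intro exI[of _ 1] allI impI conjI)
  fix A :: "real set" and k :: "real^2"
  assume "A \<in> sets borel \<and> A \<subseteq> {0..1}" and "k \<noteq> 0"
  then show "green_L1 k A \<le> ennreal (1 * (measure lborel A / norm k) * min (measure lborel A) (1 / norm k))"
    using green_L1_le_measure_min by simp
next
  fix A :: "real set"
  assume A: "A \<in> sets borel \<and> A \<subseteq> {0..1}"
  \<comment> \<open>also for measure zero, as then both sides vanish (1 / 0 = 0)\<close>
  have "measure lborel A = 1 * (measure lborel A)\<^sup>2 * (1 / measure lborel A)"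
    by (cases "measure lborel A = 0") (simp_all add: power2_eq_square)
  then show "green_L1 0 A \<le> ennreal (1 * (measure lborel A)\<^sup>2 * (1 / measure lborel A)
                                     * (LINT z:A|lborel. min z (1 - z)))"
    using green_L1_zero_le[of A] A by simp
qed

end
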